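(* The space $R^\natural(S^1\times D^2,A_1)$ is homeomorphic to $S^3=\{(z_1,z_2)\in\mathbb{C}^2:|z_1|^2+|z_2|^2=1\}$, via the map sending $(z_1,z_2)$ to the class of $$a=i\sigma_z,\ b=a^{-1},\ A=\begin{pmatrix} z_1&-\bar z_2\\ z_2&\bar z_1\end{pmatrix},\ B=1,\ h=i\sigma_x,\ w=-1.$$ All classes in $R^\natural(S^1\times D^2,A_1)$ are nonabelian.
   Context: Pauli matrices standard. $R^\natural(S^1\times D^2,A_1)$ is the traceless character variety of the solid torus minus an unknotted arc $A_1$, a small meridional loop $H$ around $A_1$, and an arc $W$ joining $A_1$ to $H$, whose fundamental group is $\langle A,B,a,b,h,w\mid hwa=ah,\ b=a^{-1},\ B=1\rangle$. Concretely, it is the space of tuples $(A,B,a,b,h,w)\in SU(2)^6$ with $\operatorname{tr}a=\operatorname{tr}h=0$, $w=-1$, $hwa=ah$, $b=a^{-1}$, $B=1$, modulo simultaneous conjugation, with quotient topology. A class is nonabelian if the matrices of a representative do not all pairwise commute. *)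

theory Defs
  imports "HOL-Analysis.Analysis"
begin

type_synonym cmat = "complex^2^2"

definition mat2 :: "complex \<Rightarrow> complex \<Rightarrow> complex \<Rightarrow> complex \<Rightarrow> cmat" where
  "mat2 p q r s = vector [vector [p, q], vector [r, s]]"

definition ctrans :: "cmat \<Rightarrow> cmat" where
  "ctrans U = (\<chi> i j. cnj (U $ j $ i))"

definition SU2 :: "cmat set" where
  "SU2 = {U. U ** ctrans U = mat 1 \<and> det U = 1}"

definition tr2 :: "cmat \<Rightarrow> complex" where
  "tr2 U = U $ 1 $ 1 + U $ 2 $ 2"

definition sigma_x :: cmat where "sigma_x = mat2 0 1 1 0"
definition sigma_z :: cmat where "sigma_z = mat2 1 0 0 (-1)"

type_synonym tuple6 = "cmat \<times> cmat \<times> cmat \<times> cmat \<times> cmat \<times> cmat"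

text \<open>Representations (A,B,a,b,h,w) of the fundamental group with the traceless conditions.\<close>
definition Rep_set :: "tuple6 set" where
  "Rep_set = {(A, B, a, b, h, w).
     A \<in> SU2 \<and> B \<in> SU2 \<and> a \<in> SU2 \<and> b \<in> SU2 \<and> h \<in> SU2 \<and> w \<in> SU2 \<and>
     tr2 a = 0 \<and> tr2 h = 0 \<and> w = - mat 1 \<and> h ** w ** a = a ** h \<and>
     b = matrix_inv a \<and> B = mat 1}"

definition conj_tuple :: "cmat \<Rightarrow> tuple6 \<Rightarrow> tuple6" where
  "conj_tuple g t = (case t of (A, B, a, b, h, w) \<Rightarrow>
     (g ** A ** matrix_inv g, g ** B ** matrix_inv g, g ** a ** matrix_inv g,
      g ** b ** matrix_inv g, g ** h ** matrix_inv g, g ** w ** matrix_inv g))"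

definition conj_rel :: "tuple6 rel" where
  "conj_rel = {(t, t'). t \<in> Rep_set \<and> t' \<in> Rep_set \<and> (\<exists>g\<in>SU2. t' = conj_tuple g t)}"

definition quotient_topology :: "'a topology \<Rightarrow> 'a rel \<Rightarrow> 'a set topology" where
  "quotient_topology X r =
     topology (\<lambda>U. U \<subseteq> topspace X // r \<and> openin X (\<Union>U))"

definition char_variety :: "tuple6 set topology" where
  "char_variety = quotient_topology (subtopology euclidean Rep_set) conj_rel"

definition S3 :: "(complex \<times> complex) set" where
  "S3 = {(z1, z2). (cmod z1)\<^sup>2 + (cmod z2)\<^sup>2 = 1}"

definition param_map :: "complex \<times> complex \<Rightarrow> tuple6 set" where
  "param_map z = (case z of (z1, z2) \<Rightarrow>
     conj_rel `` {(mat2 z1 (- cnj z2) z2 (cnj z1), mat 1, mat \<i> ** sigma_z, matrix_inv (mat \<i> ** sigma_z),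
                   mat \<i> ** sigma_x, - mat 1)})"

definition pairwise_commute_tuple :: "tuple6 \<Rightarrow> bool" where
  "pairwise_commute_tuple t = (case t of (A, B, a, b, h, w) \<Rightarrow>
     (\<forall>X\<in>{A, B, a, b, h, w}. \<forall>Y\<in>{A, B, a, b, h, w}. X ** Y = Y ** X))"

definition nonabelian_class :: "tuple6 set \<Rightarrow> bool" where
  "nonabelian_class c = (\<exists>t\<in>c. \<not> pairwise_commute_tuple t)"

end

theory Submission
  imports Defs
begin

text \<open>Write \<open>SU(2)\<close> as the unit quaternions. The relations say that \<open>a\<close> is a unit
  quaternion of trace zero, i.e. purely imaginary, and (as \<open>w = -1\<close>) that \<open>h\<close> anticommutes
  with \<open>a\<close>; so \<open>a\<close>, \<open>h\<close> and \<open>a h\<close> form an orthonormal frame of the imaginary quaternions, and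
  simultaneous conjugation can move it to \<open>i, j, k\<close>. The only datum left is then \<open>A\<close>, an arbitrary
  point of \<open>S\<^sup>3\<close>. Inversely, the real coordinates of \<open>A\<close> with respect to \<open>1, a, a h, h\<close> are
  invariant under conjugation, so they define a continuous map on the quotient, inverse to the
  parametrisation. No tuple is abelian since \<open>a\<close> and \<open>h\<close> anticommute.\<close>

section \<open>Quotient topology\<close>

lemma quotient_eq_class_of_mem:
  assumes "equiv A r" "X \<in> A // r" "x \<in> X"
  shows "X = r `` {x}"
proof -
  obtain a where a: "X = r `` {a}" "a \<in> A" using assms(2) by (rule quotientE)
  then have "(a, x) \<in> r" using assms(3) by simp
  then show ?thesis using a(1) equiv_class_eq[OF assms(1)] by simp
qed

lemma some_mem_quotient_invariant:
  assumes r: "equiv A r" and f: "\<And>x x'. (x, x') \<in> r \<Longrightarrow> f x = f x'"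
    and "X \<in> A // r" "x \<in> X"
  shows "f (SOME x. x \<in> X) = f x"
proof -
  have "(SOME x. x \<in> X) \<in> X" using \<open>x \<in> X\<close> by (rule someI)
  then have "(SOME x. x \<in> X, x) \<in> r"
    using quotient_eq_iff[OF r \<open>X \<in> A // r\<close> \<open>X \<in> A // r\<close> _ \<open>x \<in> X\<close>] by simp
  then show ?thesis by (rule f)
qed

lemma istopology_quotient:
  assumes "equiv (topspace X) r"
  shows "istopology (\<lambda>U. U \<subseteq> topspace X // r \<and> openin X (\<Union>U))"
  unfolding istopology_def
proof (rule conjI; intro allI impI)
  fix S T
  assume S: "S \<subseteq> topspace X // r \<and> openin X (\<Union>S)"
    and T: "T \<subseteq> topspace X // r \<and> openin X (\<Union>T)"
  have "\<Union>S \<inter> \<Union>T \<subseteq> \<Union>(S \<inter> T)"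
  proof
    fix x assume "x \<in> \<Union>S \<inter> \<Union>T"
    then obtain C D where "C \<in> S" "D \<in> T" "x \<in> C" "x \<in> D" by blast
    moreover have "C = D"
      using quotient_disj[OF assms, of C D] S T calculation by blast
    ultimately show "x \<in> \<Union>(S \<inter> T)" by blast
  qed
  then have "\<Union>(S \<inter> T) = \<Union>S \<inter> \<Union>T" by blast
  then show "S \<inter> T \<subseteq> topspace X // r \<and> openin X (\<Union>(S \<inter> T))"
    using S T openin_Int by auto
next
  fix K assume "\<forall>U\<in>K. U \<subseteq> topspace X // r \<and> openin X (\<Union>U)"
  moreover have "\<Union>(\<Union>K) = (\<Union>U\<in>K. \<Union>U)" by blast
  ultimately show "\<Union>K \<subseteq> topspace X // r \<and> openin X (\<Union>(\<Union>K))"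
    using openin_Union[of "Union ` K" X] by auto
qed

lemma openin_quotient_topology:
  assumes "equiv (topspace X) r"
  shows "openin (quotient_topology X r) U \<longleftrightarrow> U \<subseteq> topspace X // r \<and> openin X (\<Union>U)"
  unfolding quotient_topology_def using istopology_quotient[OF assms] by simp

lemma topspace_quotient_topology:
  assumes "equiv (topspace X) r"
  shows "topspace (quotient_topology X r) = topspace X // r"
proof
  show "topspace (quotient_topology X r) \<subseteq> topspace X // r"
    unfolding topspace_def openin_quotient_topology[OF assms] by blast
  show "topspace X // r \<subseteq> topspace (quotient_topology X r)"
    by (rule openin_subset)
       (simp add: openin_quotient_topology[OF assms] Union_quotient[OF assms])
qed

lemma continuous_map_to_quotient_topology:
  assumes r: "equiv (topspace X) r" and f: "continuous_map Y X f"
  shows "continuous_map Y (quotient_topology X r) (\<lambda>y. r `` {f y})"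
  unfolding continuous_map_def topspace_quotient_topology[OF r]
proof (intro conjI allI impI)
  show "(\<lambda>y. r `` {f y}) \<in> topspace Y \<rightarrow> topspace X // r"
    using f by (auto intro: quotientI simp: continuous_map_def)
next
  fix U assume "openin (quotient_topology X r) U"
  then have U: "U \<subseteq> topspace X // r" "openin X (\<Union>U)"
    by (simp_all add: openin_quotient_topology[OF r])
  have "r `` {f y} \<in> U \<longleftrightarrow> f y \<in> \<Union>U" if "y \<in> topspace Y" for y
  proof
    have "f y \<in> topspace X" using f that by (simp add: continuous_map_def Pi_iff)
    then show "r `` {f y} \<in> U \<Longrightarrow> f y \<in> \<Union>U"
      using equiv_class_self[OF r] by blast
    show "f y \<in> \<Union>U \<Longrightarrow> r `` {f y} \<in> U"
      using U(1) quotient_eq_class_of_mem[OF r] by blast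
  qed
  then have "{y \<in> topspace Y. r `` {f y} \<in> U} = {y \<in> topspace Y. f y \<in> \<Union>U}"
    by blast
  then show "openin Y {y \<in> topspace Y. r `` {f y} \<in> U}"
    using openin_continuous_map_preimage[OF f U(2)] by simp
qed

lemma continuous_map_from_quotient_topology:
  assumes r: "equiv (topspace X) r" and f: "continuous_map X Y f"
    and f_inv: "\<And>x x'. (x, x') \<in> r \<Longrightarrow> f x = f x'"
  shows "continuous_map (quotient_topology X r) Y (\<lambda>C. f (SOME x. x \<in> C))"
proof -
  have on_class: "f (SOME x. x \<in> C) = f x" if "C \<in> topspace X // r" "x \<in> C" for C x
    by (rule some_mem_quotient_invariant[OF r]) (use f_inv that in blast)+
  show ?thesis
    unfolding continuous_map_def topspace_quotient_topology[OF r]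
  proof (intro conjI allI impI)
    show "(\<lambda>C. f (SOME x. x \<in> C)) \<in> topspace X // r \<rightarrow> topspace Y"
    proof
      fix C assume C: "C \<in> topspace X // r"
      then obtain x where x: "x \<in> topspace X" "C = r `` {x}" by (rule quotientE)
      then have "f (SOME x. x \<in> C) = f x"
        using on_class[OF C] equiv_class_self[OF r] by blast
      then show "f (SOME x. x \<in> C) \<in> topspace Y"
        using f x(1) by (simp add: continuous_map_def Pi_iff)
    qed
  next
    fix V assume "openin Y V"
    define U where "U = {C \<in> topspace X // r. f (SOME x. x \<in> C) \<in> V}"
    have "\<Union>U = {x \<in> topspace X. f x \<in> V}"
    proof (intro equalityI subsetI)
      fix x assume "x \<in> \<Union>U"
      then obtain C where "C \<in> topspace X // r" "f (SOME x. x \<in> C) \<in> V" "x \<in> C"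
        unfolding U_def by blast
      then show "x \<in> {x \<in> topspace X. f x \<in> V}"
        using on_class in_quotient_imp_subset[OF r] by auto
    next
      fix x assume x: "x \<in> {x \<in> topspace X. f x \<in> V}"
      then have x_cls: "x \<in> r `` {x}" and cls: "r `` {x} \<in> topspace X // r"
        using equiv_class_self[OF r] quotientI by auto
      then have "r `` {x} \<in> U"
        using on_class[OF cls x_cls] x unfolding U_def by simp
      then show "x \<in> \<Union>U" using x_cls by blast
    qed
    then show "openin (quotient_topology X r) U"
      using openin_continuous_map_preimage[OF f \<open>openin Y V\<close>]
      by (simp add: openin_quotient_topology[OF r] U_def)
  qed
qed

lemma homeomorphic_map_quotient_topology:
  assumes r: "equiv (topspace X) r"
    and s: "continuous_map Y X s" and f: "continuous_map X Y f"
    and f_inv: "\<And>x x'. (x, x') \<in> r \<Longrightarrow> f x = f x'"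
    and f_s: "\<And>y. y \<in> topspace Y \<Longrightarrow> f (s y) = y"
    and s_f: "\<And>x. x \<in> topspace X \<Longrightarrow> (x, s (f x)) \<in> r"
  shows "homeomorphic_map Y (quotient_topology X r) (\<lambda>y. r `` {s y})"
proof -
  have on_class: "f (SOME x. x \<in> C) = f x" if "C \<in> topspace X // r" "x \<in> C" for C x
    by (rule some_mem_quotient_invariant[OF r]) (use f_inv that in blast)+
  have "homeomorphic_maps Y (quotient_topology X r) (\<lambda>y. r `` {s y}) (\<lambda>C. f (SOME x. x \<in> C))"
    unfolding homeomorphic_maps_def topspace_quotient_topology[OF r]
  proof (intro conjI ballI)
    show "continuous_map Y (quotient_topology X r) (\<lambda>y. r `` {s y})"
      using r s by (rule continuous_map_to_quotient_topology)
    show "continuous_map (quotient_topology X r) Y (\<lambda>C. f (SOME x. x \<in> C))"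
      using r f f_inv by (rule continuous_map_from_quotient_topology)
  next
    fix y assume y: "y \<in> topspace Y"
    then have sy: "s y \<in> topspace X" using s by (simp add: continuous_map_def Pi_iff)
    show "f (SOME x. x \<in> r `` {s y}) = y"
      using on_class[OF quotientI[OF sy] equiv_class_self[OF r sy]] f_s[OF y] by simp
  next
    fix C assume C: "C \<in> topspace X // r"
    then obtain x where x: "x \<in> topspace X" "C = r `` {x}" by (rule quotientE)
    then have "f (SOME x. x \<in> C) = f x"
      using on_class[OF C] equiv_class_self[OF r] by blast
    then show "r `` {s (f (SOME x. x \<in> C))} = C"
      using equiv_class_eq[OF r s_f[OF x(1)]] x(2) by simp
  qed
  then show ?thesis using homeomorphic_map_maps by blast
qed

lemma cmat_eq_mat2: "(X::cmat) = mat2 (X$1$1) (X$1$2) (X$2$1) (X$2$2)"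
  unfolding mat2_def by (simp add: vec_eq_iff forall_2)

lemma mat2_nth [simp]:
  "mat2 a b c d $1$1 = a" "mat2 a b c d $1$2 = b" "mat2 a b c d $2$1 = c" "mat2 a b c d $2$2 = d"
  unfolding mat2_def by simp_all

lemma mat2_eq_iff: "mat2 a b c d = mat2 a' b' c' d' \<longleftrightarrow> a = a' \<and> b = b' \<and> c = c' \<and> d = d'"
  by (metis mat2_nth)

lemma mat2_mult:
  "mat2 a b c d ** mat2 e f g h = mat2 (a*e + b*g) (a*f + b*h) (c*e + d*g) (c*f + d*h)"
  by (subst cmat_eq_mat2) (simp add: matrix_matrix_mult_def sum_2)

lemma mat_eq_mat2: "mat k = mat2 k 0 0 k"
  by (subst cmat_eq_mat2) (simp add: mat_def)

lemma uminus_mat2: "- mat2 a b c d = mat2 (-a) (-b) (-c) (-d)"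
  by (subst cmat_eq_mat2) simp

lemma det_mat2: "det (mat2 a b c d) = a*d - b*c"
  by (simp add: det_2)

lemma ctrans_mat2: "ctrans (mat2 a b c d) = mat2 (cnj a) (cnj c) (cnj b) (cnj d)"
  by (subst cmat_eq_mat2) (simp add: ctrans_def)

lemma uminus_matrix_mult: "(- X) ** (Y::cmat) = - (X ** Y)"
  by (simp add: vec_eq_iff matrix_matrix_mult_def sum_negf)

lemma matrix_mult_uminus: "(X::cmat) ** (- Y) = - (X ** Y)"
  by (simp add: vec_eq_iff matrix_matrix_mult_def sum_negf)

lemma mat_matrix_mult_commute: "mat k ** (X::cmat) = X ** mat k"
  by (subst (1 2) cmat_eq_mat2) (simp add: mat_eq_mat2 mat2_mult mult.commute)

lemma matrix_inv_unique: "(A::cmat) ** B = mat 1 \<Longrightarrow> B ** A = mat 1 \<Longrightarrow> matrix_inv A = B"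
proof -
  assume AB: "A ** B = mat 1" "B ** A = mat 1"
  then have "\<exists>B. A ** B = mat 1 \<and> B ** A = mat 1" by blast
  then have "A ** matrix_inv A = mat 1 \<and> matrix_inv A ** A = mat 1"
    unfolding matrix_inv_def by (rule someI_ex)
  then have "matrix_inv A = matrix_inv A ** (A ** B)" "matrix_inv A ** A = mat 1"
    using AB by simp_all
  then show ?thesis by (simp add: matrix_mul_assoc)
qed

section \<open>\<open>SU(2)\<close> as the unit quaternions\<close>

text \<open>The quaternion \<open>p + q j\<close> with \<open>p, q \<in> \<complex>\<close>, in the standard representation.\<close>

definition quat :: "complex \<Rightarrow> complex \<Rightarrow> cmat" where
  "quat p q = mat2 p (- cnj q) q (cnj p)"

definition quat_normsq :: "complex \<Rightarrow> complex \<Rightarrow> real" where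
  "quat_normsq p q = (cmod p)\<^sup>2 + (cmod q)\<^sup>2"

lemma quat_mult: "quat p q ** quat r s = quat (p*r - cnj q * s) (q*r + cnj p * s)"
  unfolding quat_def mat2_mult mat2_eq_iff by (simp add: algebra_simps)

lemma quat_eq_iff: "quat p q = quat r s \<longleftrightarrow> p = r \<and> q = s"
  unfolding quat_def mat2_eq_iff by auto

lemma mat_of_real_eq_quat: "mat (of_real k) = quat (of_real k) 0"
  unfolding quat_def mat_eq_mat2 by simp

lemma mat_one_eq_quat: "mat 1 = quat 1 0"
  using mat_of_real_eq_quat[of 1] by simp

lemma uminus_quat: "- quat p q = quat (-p) (-q)"
  unfolding quat_def uminus_mat2 by simp

lemma uminus_mat_one_eq_quat: "- mat 1 = quat (-1) 0"
  unfolding mat_one_eq_quat uminus_quat by simp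

lemma of_real_quat_normsq: "complex_of_real (quat_normsq p q) = p * cnj p + q * cnj q"
  by (simp only: quat_normsq_def of_real_add complex_norm_square)

lemma quat_normsq_mult:
  "quat_normsq (p*r - cnj q * s) (q*r + cnj p * s) = quat_normsq p q * quat_normsq r s"
proof -
  have "complex_of_real (quat_normsq (p*r - cnj q * s) (q*r + cnj p * s))
      = complex_of_real (quat_normsq p q * quat_normsq r s)"
    unfolding of_real_mult of_real_quat_normsq by (simp add: algebra_simps)
  then show ?thesis by (simp only: of_real_eq_iff)
qed

lemma quat_mult_conj: "quat p q ** quat (cnj p) (-q) = quat (quat_normsq p q) 0"
  unfolding quat_mult quat_eq_iff of_real_quat_normsq by (simp add: algebra_simps)

lemma quat_conj_mult: "quat (cnj p) (-q) ** quat p q = quat (quat_normsq p q) 0"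
  unfolding quat_mult quat_eq_iff of_real_quat_normsq by (simp add: algebra_simps)

lemma quat_in_SU2: "quat_normsq p q = 1 \<Longrightarrow> quat p q \<in> SU2"
proof -
  assume n: "quat_normsq p q = 1"
  have "ctrans (quat p q) = quat (cnj p) (-q)"
    unfolding quat_def ctrans_mat2 by simp
  moreover have "det (quat p q) = quat_normsq p q"
    unfolding quat_def det_mat2 of_real_quat_normsq by (simp add: algebra_simps)
  ultimately show ?thesis
    unfolding SU2_def using n quat_mult_conj[of p q] by (simp add: mat_one_eq_quat)
qed

lemma SU2_obtain_quat:
  assumes "U \<in> SU2"
  obtains p q where "U = quat p q" "quat_normsq p q = 1"
proof -
  obtain a b c d where U: "U = mat2 a b c d" using cmat_eq_mat2 by blast
  have e: "a * cnj a + b * cnj b = 1" "c * cnj a + d * cnj b = 0" "a * cnj c + b * cnj d = 0"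
    "c * cnj c + d * cnj d = 1" "a*d - b*c = 1"
    using assms unfolding SU2_def U
    by (simp_all add: ctrans_mat2 mat2_mult det_mat2 mat_eq_mat2 mat2_eq_iff)
  \<comment> \<open>unitarity and \<open>det U = 1\<close> force \<open>U\<^sup>-\<^sup>1 = adj U\<close>\<close>
  have "cnj a * (a*d - b*c) = d * (a * cnj a + b * cnj b) - b * (c * cnj a + d * cnj b)"
    by (simp add: algebra_simps)
  then have d: "d = cnj a" using e by simp
  have "cnj c * (a*d - b*c) = d * (a * cnj c + b * cnj d) - b * (c * cnj c + d * cnj d)"
    by (simp add: algebra_simps)
  then have "cnj c = - b" using e by simp
  then have b: "b = - cnj c" by simp
  have "U = quat a c" unfolding U quat_def b d ..
  moreover have "complex_of_real (quat_normsq a c) = 1"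
    using e(4) d by (simp add: of_real_quat_normsq mult.commute add.commute)
  then have "quat_normsq a c = 1" by (simp only: of_real_eq_1_iff)
  ultimately show ?thesis using that by blast
qed

lemma matrix_inv_quat: "quat_normsq p q = 1 \<Longrightarrow> matrix_inv (quat p q) = quat (cnj p) (- q)"
  by (rule matrix_inv_unique) (simp_all add: quat_mult_conj quat_conj_mult mat_one_eq_quat)

lemma SU2_matrix_inv: "g \<in> SU2 \<Longrightarrow> matrix_inv g \<in> SU2"
  by (metis SU2_obtain_quat quat_in_SU2 matrix_inv_quat quat_normsq_def complex_mod_cnj
      norm_minus_cancel)

lemma SU2_mult_matrix_inv: "g \<in> SU2 \<Longrightarrow> g ** matrix_inv g = mat 1"
  by (metis SU2_obtain_quat matrix_inv_quat quat_mult_conj mat_one_eq_quat of_real_1)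

lemma SU2_matrix_inv_mult: "g \<in> SU2 \<Longrightarrow> matrix_inv g ** g = mat 1"
  by (metis SU2_obtain_quat matrix_inv_quat quat_conj_mult mat_one_eq_quat of_real_1)

lemma SU2_mult: "g \<in> SU2 \<Longrightarrow> h \<in> SU2 \<Longrightarrow> g ** h \<in> SU2"
  by (metis SU2_obtain_quat quat_in_SU2 quat_mult quat_normsq_mult mult_1)

lemma SU2_mat_one: "mat 1 \<in> SU2"
  unfolding mat_one_eq_quat by (rule quat_in_SU2) (simp add: quat_normsq_def)

lemma matrix_inv_mult_SU2:
  "g \<in> SU2 \<Longrightarrow> h \<in> SU2 \<Longrightarrow> matrix_inv (g ** h) = matrix_inv h ** matrix_inv g"
proof (rule matrix_inv_unique)
  assume "g \<in> SU2" "h \<in> SU2"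
  then show "g ** h ** (matrix_inv h ** matrix_inv g) = mat 1"
    by (metis SU2_mult_matrix_inv matrix_mul_assoc matrix_mul_rid)
  show "matrix_inv h ** matrix_inv g ** (g ** h) = mat 1"
    using \<open>g \<in> SU2\<close> \<open>h \<in> SU2\<close> by (metis SU2_matrix_inv_mult matrix_mul_assoc matrix_mul_rid)
qed

definition conj_by :: "cmat \<Rightarrow> cmat \<Rightarrow> cmat" where
  "conj_by g X = g ** X ** matrix_inv g"

lemma conj_tuple_eq:
  "conj_tuple g (A, B, a, b, h, w) =
     (conj_by g A, conj_by g B, conj_by g a, conj_by g b, conj_by g h, conj_by g w)"
  unfolding conj_tuple_def conj_by_def by simp

lemma conj_by_mult: "g \<in> SU2 \<Longrightarrow> conj_by g (X ** Y) = conj_by g X ** conj_by g Y"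
proof -
  assume "g \<in> SU2"
  have "conj_by g X ** conj_by g Y = g ** X ** (matrix_inv g ** g) ** Y ** matrix_inv g"
    unfolding conj_by_def by (simp only: matrix_mul_assoc)
  also have "\<dots> = conj_by g (X ** Y)"
    unfolding conj_by_def using \<open>g \<in> SU2\<close> by (simp add: SU2_matrix_inv_mult matrix_mul_assoc)
  finally show ?thesis ..
qed

lemma conj_by_mat_one: "g \<in> SU2 \<Longrightarrow> conj_by g (mat 1) = mat 1"
  unfolding conj_by_def by (simp add: SU2_mult_matrix_inv)

lemma conj_by_uminus: "conj_by g (- X) = - conj_by g X"
  unfolding conj_by_def by (simp add: uminus_matrix_mult matrix_mult_uminus)

lemma conj_by_SU2: "g \<in> SU2 \<Longrightarrow> X \<in> SU2 \<Longrightarrow> conj_by g X \<in> SU2"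
  unfolding conj_by_def by (simp add: SU2_mult SU2_matrix_inv)

lemma tr2_mult_commute: "tr2 ((X::cmat) ** Y) = tr2 (Y ** X)"
  by (simp add: tr2_def matrix_matrix_mult_def sum_2 algebra_simps)

lemma tr2_conj_by: "g \<in> SU2 \<Longrightarrow> tr2 (conj_by g X) = tr2 X"
  unfolding conj_by_def
  by (subst tr2_mult_commute) (simp add: matrix_mul_assoc SU2_matrix_inv_mult)

lemma conj_by_matrix_inv:
  "g \<in> SU2 \<Longrightarrow> a \<in> SU2 \<Longrightarrow> conj_by g (matrix_inv a) = matrix_inv (conj_by g a)"
  by (rule matrix_inv_unique[symmetric])
    (simp_all add: conj_by_mult[symmetric] SU2_matrix_inv_mult SU2_mult_matrix_inv conj_by_mat_one)

lemma conj_by_conj_by: "g \<in> SU2 \<Longrightarrow> k \<in> SU2 \<Longrightarrow> conj_by k (conj_by g X) = conj_by (k ** g) X"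
  unfolding conj_by_def by (simp add: matrix_inv_mult_SU2 matrix_mul_assoc)

lemma conj_by_mat_one_left: "conj_by (mat 1) X = X"
proof -
  have "matrix_inv (mat 1 :: cmat) = mat 1" by (rule matrix_inv_unique) simp_all
  then show ?thesis unfolding conj_by_def by simp
qed

lemma conj_by_eqI: "g \<in> SU2 \<Longrightarrow> g ** X = Y ** g \<Longrightarrow> conj_by g X = Y"
  unfolding conj_by_def by (simp add: SU2_mult_matrix_inv flip: matrix_mul_assoc)

lemma Rep_setE:
  assumes "t \<in> Rep_set"
  obtains A a h where "t = (A, mat 1, a, matrix_inv a, h, - mat 1)"
    "A \<in> SU2" "a \<in> SU2" "h \<in> SU2" "tr2 a = 0" "tr2 h = 0" "a ** h = - (h ** a)"
proof -
  obtain A a h where "t = (A, mat 1, a, matrix_inv a, h, - mat 1)"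
    "A \<in> SU2" "a \<in> SU2" "h \<in> SU2" "tr2 a = 0" "tr2 h = 0"
    and rel: "h ** (- mat 1) ** a = a ** h"
    using assms unfolding Rep_set_def by auto
  moreover have "a ** h = - (h ** a)"
    unfolding rel[symmetric] by (simp add: uminus_matrix_mult matrix_mult_uminus)
  ultimately show ?thesis using that by blast
qed

lemma conj_tuple_Rep_set:
  assumes t: "t \<in> Rep_set" and g: "g \<in> SU2"
  shows "conj_tuple g t \<in> Rep_set"
proof -
  obtain A a h where t_eq: "t = (A, mat 1, a, matrix_inv a, h, - mat 1)"
    and in_SU2: "A \<in> SU2" "a \<in> SU2" "h \<in> SU2" "- mat 1 \<in> SU2"
    and "tr2 a = 0" "tr2 h = 0" "h ** (- mat 1) ** a = a ** h"
    using t unfolding Rep_set_def by auto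
  moreover have "conj_by g h ** (- mat 1) ** conj_by g a = conj_by g a ** conj_by g h"
    using arg_cong[OF \<open>h ** (- mat 1) ** a = a ** h\<close>, of "conj_by g"] g
    by (simp add: conj_by_mult conj_by_uminus conj_by_mat_one)
  ultimately show ?thesis
    unfolding Rep_set_def t_eq conj_tuple_eq using g
    by (simp add: conj_by_SU2 tr2_conj_by conj_by_mat_one conj_by_uminus conj_by_matrix_inv
        SU2_matrix_inv SU2_mat_one)
qed

lemma conj_tuple_conj_tuple:
  "g \<in> SU2 \<Longrightarrow> k \<in> SU2 \<Longrightarrow> conj_tuple k (conj_tuple g t) = conj_tuple (k ** g) t"
  by (cases t) (simp add: conj_tuple_eq conj_by_conj_by)

lemma equiv_conj_rel: "equiv Rep_set conj_rel"
proof (rule equivI)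
  show "conj_rel \<subseteq> Rep_set \<times> Rep_set" unfolding conj_rel_def by auto
  have id: "conj_tuple (mat 1) t = t" for t
    by (cases t) (simp add: conj_tuple_eq conj_by_mat_one_left)
  show "refl_on Rep_set conj_rel"
  proof (rule refl_onI)
    fix t assume "t \<in> Rep_set"
    then show "(t, t) \<in> conj_rel" unfolding conj_rel_def using SU2_mat_one id[of t] by force
  qed
  show "sym conj_rel"
  proof (rule symI)
    fix t t' assume "(t, t') \<in> conj_rel"
    then obtain g where t: "t \<in> Rep_set" "t' \<in> Rep_set" and g: "g \<in> SU2" "t' = conj_tuple g t"
      unfolding conj_rel_def by blast
    then have "t = conj_tuple (matrix_inv g) t'"
      by (simp add: conj_tuple_conj_tuple SU2_matrix_inv SU2_matrix_inv_mult id)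
    then show "(t', t) \<in> conj_rel"
      unfolding conj_rel_def using t SU2_matrix_inv[OF g(1)] by blast
  qed
  show "trans conj_rel"
  proof (rule transI)
    fix t t' t'' assume "(t, t') \<in> conj_rel" "(t', t'') \<in> conj_rel"
    then obtain g k where "t \<in> Rep_set" "t'' \<in> Rep_set" "g \<in> SU2" "k \<in> SU2"
      "t' = conj_tuple g t" "t'' = conj_tuple k t'"
      unfolding conj_rel_def by blast
    moreover from calculation have "t'' = conj_tuple (k ** g) t"
      by (simp add: conj_tuple_conj_tuple)
    ultimately show "(t, t'') \<in> conj_rel"
      unfolding conj_rel_def using SU2_mult by blast
  qed
qed

lemma Rep_set_not_pairwise_commute:
  assumes "t \<in> Rep_set"
  shows "\<not> pairwise_commute_tuple t"
proof
  obtain A a h where t_eq: "t = (A, mat 1, a, matrix_inv a, h, - mat 1)"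
    and "a \<in> SU2" "h \<in> SU2" and anti: "a ** h = - (h ** a)"
    using assms by (rule Rep_setE)
  assume "pairwise_commute_tuple t"
  then have comm: "a ** h = h ** a"
    unfolding t_eq pairwise_commute_tuple_def prod.case by blast
  have "h ** a = - (h ** a)" using anti unfolding comm .
  then have "h ** a = 0" by (simp add: vec_eq_iff)
  moreover have "det (h ** a) = 1"
    using SU2_mult[OF \<open>h \<in> SU2\<close> \<open>a \<in> SU2\<close>] by (simp add: SU2_def)
  ultimately show False by (simp add: det_2)
qed

section \<open>A complete invariant of conjugacy classes\<close>

text \<open>The Euclidean inner product of \<open>\<complex>\<^sup>2 = \<real>\<^sup>4\<close> on first columns; on quaternions it is the
  inner product of \<open>\<bbbH> = \<real>\<^sup>4\<close>, which unit quaternions preserve on either side.\<close>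

definition quat_inner :: "cmat \<Rightarrow> cmat \<Rightarrow> real" where
  "quat_inner X Y = Re (X$1$1 * cnj (Y$1$1) + X$2$1 * cnj (Y$2$1))"

lemma quat_inner_quat: "quat_inner (quat p q) (quat r s) = Re (p * cnj r + q * cnj s)"
  unfolding quat_inner_def quat_def by simp

lemma quat_inner_mult_left:
  "quat_inner (quat u v ** quat p q) (quat u v ** quat r s)
     = quat_normsq u v * quat_inner (quat p q) (quat r s)"
  unfolding quat_mult quat_inner_quat quat_normsq_def cmod_power2
  by (simp add: algebra_simps power2_eq_square)

lemma quat_inner_mult_right:
  "quat_inner (quat p q ** quat u v) (quat r s ** quat u v)
     = quat_normsq u v * quat_inner (quat p q) (quat r s)"
  unfolding quat_mult quat_inner_quat quat_normsq_def cmod_power2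
  by (simp add: algebra_simps power2_eq_square)

lemma quat_inner_conj_by:
  assumes "g \<in> SU2" "X \<in> SU2" "Y \<in> SU2"
  shows "quat_inner (conj_by g X) (conj_by g Y) = quat_inner X Y"
proof -
  obtain u v where g: "g = quat u v" "quat_normsq u v = 1" using assms(1) SU2_obtain_quat by blast
  obtain p q where X: "X = quat p q" using assms(2) SU2_obtain_quat by blast
  obtain r s where Y: "Y = quat r s" using assms(3) SU2_obtain_quat by blast
  have n: "quat_normsq (cnj u) (-v) = 1" using g(2) unfolding quat_normsq_def by simp
  have "quat_inner (conj_by g X) (conj_by g Y)
      = quat_inner (quat u v ** quat p q ** quat (cnj u) (-v))
          (quat u v ** quat r s ** quat (cnj u) (-v))"
    unfolding conj_by_def g(1) X Y matrix_inv_quat[OF g(2)] ..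
  also have "\<dots> = quat_inner (quat u v ** quat p q) (quat u v ** quat r s)"
    unfolding quat_mult[of u v p q] quat_mult[of u v r s] quat_inner_mult_right n by simp
  also have "\<dots> = quat_inner X Y" unfolding quat_inner_mult_left g(2) X Y by simp
  finally show ?thesis .
qed

definition quat_i :: cmat where "quat_i = quat \<i> 0"
definition quat_j :: cmat where "quat_j = quat 0 \<i>"

definition normal_tuple :: "complex \<times> complex \<Rightarrow> tuple6" where
  "normal_tuple z = (quat (fst z) (snd z), mat 1, quat_i, matrix_inv quat_i, quat_j, - mat 1)"

text \<open>The coordinates of \<open>A\<close> in the orthonormal frame \<open>1, a, a h, h\<close>, which is \<open>1, i, k, j\<close> for
  a normal tuple.\<close>

definition tuple_coords :: "tuple6 \<Rightarrow> complex \<times> complex" where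
  "tuple_coords t = (case t of (A, B, a, b, h, w) \<Rightarrow>
     (Complex (quat_inner A (mat 1)) (quat_inner A a),
      Complex (quat_inner A (a ** h)) (quat_inner A h)))"

lemma param_map_eq: "param_map = (\<lambda>z. conj_rel `` {normal_tuple z})"
proof -
  have "mat \<i> ** sigma_z = quat_i" "mat \<i> ** sigma_x = quat_j"
    unfolding quat_i_def quat_j_def quat_def sigma_z_def sigma_x_def mat_eq_mat2 mat2_mult
    by simp_all
  then show ?thesis
    unfolding param_map_def normal_tuple_def by (auto simp: quat_def)
qed

lemma tuple_coords_normal_tuple: "tuple_coords (normal_tuple z) = z"
  unfolding tuple_coords_def normal_tuple_def mat_one_eq_quat quat_i_def quat_j_def
  by (cases z) (simp add: quat_mult quat_inner_quat)

lemma normal_tuple_Rep_set: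
  assumes "z \<in> S3"
  shows "normal_tuple z \<in> Rep_set"
proof -
  have "quat (fst z) (snd z) \<in> SU2"
    using assms by (intro quat_in_SU2) (auto simp: S3_def quat_normsq_def)
  moreover have "quat_i \<in> SU2" "quat_j \<in> SU2" "- mat 1 \<in> SU2"
    unfolding quat_i_def quat_j_def uminus_mat_one_eq_quat
    by (simp_all add: quat_in_SU2 quat_normsq_def)
  moreover have "tr2 quat_i = 0" "tr2 quat_j = 0"
    unfolding quat_i_def quat_j_def quat_def tr2_def by simp_all
  moreover have "quat_j ** (- mat 1) ** quat_i = quat_i ** quat_j"
    unfolding quat_i_def quat_j_def uminus_mat_one_eq_quat quat_mult by simp
  ultimately show ?thesis
    unfolding normal_tuple_def Rep_set_def by (simp add: SU2_matrix_inv SU2_mat_one)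
qed

lemma tuple_coords_conj_tuple:
  assumes t: "t \<in> Rep_set" and g: "g \<in> SU2"
  shows "tuple_coords (conj_tuple g t) = tuple_coords t"
proof -
  obtain A a h where t_eq: "t = (A, mat 1, a, matrix_inv a, h, - mat 1)"
    and "A \<in> SU2" "a \<in> SU2" "h \<in> SU2"
    using t by (rule Rep_setE)
  moreover have "quat_inner (conj_by g A) (mat 1) = quat_inner A (mat 1)"
    using quat_inner_conj_by[OF g \<open>A \<in> SU2\<close> SU2_mat_one] conj_by_mat_one[OF g] by simp
  ultimately show ?thesis
    unfolding t_eq conj_tuple_eq tuple_coords_def using g
    by (simp add: quat_inner_conj_by SU2_mult flip: conj_by_mult)
qed

lemma conj_by_eq_if_quat_intertwines:
  assumes "quat_normsq c d > 0" "quat c d ** X = Y ** quat c d"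
  shows "\<exists>g\<in>SU2. conj_by g X = Y"
proof -
  define k where "k = 1 / sqrt (quat_normsq c d)"
  define g where "g = mat (of_real k) ** quat c d"
  have "quat_normsq (of_real k * c) (of_real k * d) = k\<^sup>2 * quat_normsq c d"
    by (simp add: quat_normsq_def norm_mult algebra_simps)
  also have "\<dots> = 1" using assms(1) by (simp add: k_def power_divide)
  finally have "g \<in> SU2"
    unfolding g_def mat_of_real_eq_quat quat_mult by (simp add: quat_in_SU2)
  moreover have "g ** X = Y ** g"
  proof -
    have "g ** X = mat (of_real k) ** (Y ** quat c d)"
      unfolding g_def by (simp add: assms(2) flip: matrix_mul_assoc)
    also have "\<dots> = Y ** g"
      unfolding g_def by (simp add: mat_matrix_mult_commute flip: matrix_mul_assoc)
    finally show ?thesis .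
  qed
  ultimately show ?thesis using conj_by_eqI by blast
qed

lemma traceless_SU2_conj_quat_i:
  assumes "a \<in> SU2" "tr2 a = 0"
  shows "\<exists>g\<in>SU2. conj_by g a = quat_i"
proof -
  obtain \<alpha> \<beta> where a: "a = quat \<alpha> \<beta>" "quat_normsq \<alpha> \<beta> = 1"
    using assms(1) SU2_obtain_quat by blast
  define x where "x = Im \<alpha>"
  have "Re \<alpha> = 0" using assms(2) unfolding a tr2_def quat_def by (simp add: complex_eq_iff)
  then have \<alpha>: "\<alpha> = \<i> * of_real x" unfolding x_def by (simp add: complex_eq_iff)
  have x_\<beta>: "x\<^sup>2 + (cmod \<beta>)\<^sup>2 = 1" using a(2) unfolding quat_normsq_def \<alpha> by (simp add: norm_mult)
  then have "x\<^sup>2 \<le> 1" using zero_le_power2[of "cmod \<beta>"] by linarith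
  then have "\<bar>x\<bar> \<le> 1" by (simp only: abs_square_le_1)
  then have "x \<ge> -1" by linarith
  then consider "x = -1" | "x > -1" by linarith
  then show ?thesis
  proof cases
    case 1
    then have "\<beta> = 0" using x_\<beta> by simp
    have "quat 0 1 ** a = quat_i ** quat 0 1"
      unfolding a \<alpha> quat_i_def quat_mult using 1 \<open>\<beta> = 0\<close> by simp
    then show ?thesis
      by (rule conj_by_eq_if_quat_intertwines[rotated]) (simp add: quat_normsq_def)
  next
    case 2
    have "\<beta> * cnj \<beta> = of_real ((cmod \<beta>)\<^sup>2)" by (simp only: complex_norm_square)
    also have "\<dots> = of_real (1 - x\<^sup>2)" using x_\<beta> by (metis add_diff_cancel_left')
    also have "\<dots> = 1 - (of_real x)\<^sup>2" by simp
    finally have \<beta>: "\<beta> * cnj \<beta> = 1 - (of_real x)\<^sup>2" .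
    \<comment> \<open>the intertwiner is \<open>1 - i a\<close>: as \<open>a\<^sup>2 = i\<^sup>2 = -1\<close>, \<open>(1 - i a) a = a + i = i (1 - i a)\<close>\<close>
    have "(1 + of_real x) * \<alpha> - cnj (\<i> * \<beta>) * \<beta> = \<i> * ((1 + of_real x) * of_real x + \<beta> * cnj \<beta>)"
      unfolding \<alpha> by (simp add: algebra_simps)
    also have "\<dots> = \<i> * (1 + of_real x)"
      unfolding \<beta> by (simp add: algebra_simps power2_eq_square)
    finally have "quat (1 + of_real x) (\<i> * \<beta>) ** a = quat_i ** quat (1 + of_real x) (\<i> * \<beta>)"
      unfolding a quat_i_def quat_mult quat_eq_iff \<alpha> by (simp add: algebra_simps)
    moreover have "quat_normsq (1 + of_real x) (\<i> * \<beta>) > 0"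
    proof -
      have "cmod (1 + of_real x) = \<bar>1 + x\<bar>" by (metis norm_of_real of_real_1 of_real_add)
      then have "(cmod (1 + of_real x))\<^sup>2 > 0" using 2 by simp
      then show ?thesis unfolding quat_normsq_def by (simp add: add_pos_nonneg)
    qed
    ultimately show ?thesis by (intro conj_by_eq_if_quat_intertwines)
  qed
qed

text \<open>A unit quaternion anticommuting with \<open>i\<close> lies in the plane \<open>\<complex> j\<close>, which rotations about \<open>i\<close>
  move onto \<open>j\<close>.\<close>

lemma anticommuting_SU2_conj_quat_j:
  assumes "h \<in> SU2" "quat_i ** h = - (h ** quat_i)"
  shows "\<exists>g\<in>SU2. conj_by g quat_i = quat_i \<and> conj_by g h = quat_j"
proof -
  obtain \<gamma> \<delta> where h: "h = quat \<gamma> \<delta>" "quat_normsq \<gamma> \<delta> = 1"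
    using assms(1) SU2_obtain_quat by blast
  have "\<gamma> = 0"
    using assms(2) unfolding h quat_i_def quat_mult uminus_quat quat_eq_iff by simp
  then have "cmod \<delta> = 1" using h(2) unfolding quat_normsq_def by (simp add: abs_square_eq_1)
  define c where "c = csqrt (- \<i> * \<delta>)"
  have c_norm: "cmod c = 1" unfolding c_def using \<open>cmod \<delta> = 1\<close> by (simp add: norm_mult)
  have "cnj c * c = 1" using complex_norm_square[of c] c_norm by (simp add: mult.commute)
  moreover have "\<delta> = \<i> * (c * c)" unfolding c_def power2_eq_square[symmetric] by simp
  ultimately have "cnj c * \<delta> = \<i> * c" by (simp add: algebra_simps)
  then have "quat c 0 ** h = quat_j ** quat c 0" "quat c 0 ** quat_i = quat_i ** quat c 0"
    unfolding h \<open>\<gamma> = 0\<close> quat_i_def quat_j_def quat_mult by (simp_all add: mult.commute)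
  moreover have "quat c 0 \<in> SU2" using c_norm by (simp add: quat_in_SU2 quat_normsq_def)
  ultimately show ?thesis using conj_by_eqI by blast
qed

lemma traceless_anticommuting_conj_quat_i_quat_j:
  assumes "a \<in> SU2" "h \<in> SU2" "tr2 a = 0" "a ** h = - (h ** a)"
  shows "\<exists>g\<in>SU2. conj_by g a = quat_i \<and> conj_by g h = quat_j"
proof -
  obtain g1 where g1: "g1 \<in> SU2" "conj_by g1 a = quat_i"
    using traceless_SU2_conj_quat_i assms(1,3) by blast
  have "quat_i ** conj_by g1 h = conj_by g1 (a ** h)"
    using g1 by (simp add: conj_by_mult)
  also have "\<dots> = - (conj_by g1 h ** quat_i)"
    using g1 assms(4) by (simp add: conj_by_uminus conj_by_mult)
  finally obtain g2 where g2: "g2 \<in> SU2" "conj_by g2 quat_i = quat_i"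
    "conj_by g2 (conj_by g1 h) = quat_j"
    using anticommuting_SU2_conj_quat_j conj_by_SU2[OF g1(1) assms(2)] by blast
  have "conj_by (g2 ** g1) a = quat_i" "conj_by (g2 ** g1) h = quat_j"
    using g1 g2 by (simp_all flip: conj_by_conj_by)
  then show ?thesis using SU2_mult[OF g2(1) g1(1)] by blast
qed

lemma Rep_set_conj_normal_tuple:
  assumes t: "t \<in> Rep_set"
  shows "tuple_coords t \<in> S3" "(t, normal_tuple (tuple_coords t)) \<in> conj_rel"
proof -
  obtain A a h where t_eq: "t = (A, mat 1, a, matrix_inv a, h, - mat 1)"
    and in_SU2: "A \<in> SU2" "a \<in> SU2" "h \<in> SU2"
    and "tr2 a = 0" "a ** h = - (h ** a)"
    using t by (rule Rep_setE)
  then obtain g where g: "g \<in> SU2" "conj_by g a = quat_i" "conj_by g h = quat_j"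
    using traceless_anticommuting_conj_quat_i_quat_j by blast
  obtain p q where pq: "conj_by g A = quat p q" "quat_normsq p q = 1"
    using conj_by_SU2[OF g(1) in_SU2(1)] SU2_obtain_quat by blast
  have gt: "conj_tuple g t = normal_tuple (p, q)"
    unfolding t_eq conj_tuple_eq normal_tuple_def using g in_SU2 pq
    by (simp add: conj_by_mat_one conj_by_uminus conj_by_matrix_inv)
  have coords: "tuple_coords t = (p, q)"
    using tuple_coords_conj_tuple[OF t g(1)] unfolding gt tuple_coords_normal_tuple by simp
  then show "tuple_coords t \<in> S3"
    using pq(2) unfolding S3_def quat_normsq_def by simp
  have "normal_tuple (p, q) \<in> Rep_set"
    using conj_tuple_Rep_set[OF t g(1)] gt by simp
  then show "(t, normal_tuple (tuple_coords t)) \<in> conj_rel"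
    unfolding conj_rel_def coords using t g(1) gt[symmetric] by blast
qed

lemma continuous_on_quat:
  assumes "continuous_on S f" "continuous_on S g"
  shows "continuous_on S (\<lambda>x. quat (f x) (g x))"
proof -
  have quat_eq: "quat p q = (\<chi> i j. if i = 1 then (if j = 1 then p else - cnj q)
                                    else (if j = 1 then q else cnj p))" for p q
    by (subst cmat_eq_mat2) (simp add: quat_def mat2_eq_iff)
  have if_const: "continuous_on S u \<Longrightarrow> continuous_on S v \<Longrightarrow>
      continuous_on S (\<lambda>x. if b then u x else v x)" for b and u v :: "'a \<Rightarrow> complex"
    by (cases b) simp_all
  show ?thesis
    unfolding quat_eq by (intro continuous_on_vec_lambda if_const continuous_intros assms)
qed

lemma continuous_on_matrix_mult:
  "continuous_on S f \<Longrightarrow> continuous_on S g \<Longrightarrow> continuous_on S (\<lambda>x. f x ** (g x :: cmat))"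
  unfolding matrix_matrix_mult_def by (intro continuous_on_vec_lambda continuous_intros)

lemma continuous_on_quat_inner:
  "continuous_on S f \<Longrightarrow> continuous_on S g \<Longrightarrow> continuous_on S (\<lambda>x. quat_inner (f x) (g x))"
  unfolding quat_inner_def by (intro continuous_intros)

lemma continuous_on_tuple_coords: "continuous_on S tuple_coords"
proof -
  have coords_eq: "tuple_coords = (\<lambda>t.
      (Complex (quat_inner (fst t) (mat 1)) (quat_inner (fst t) (fst (snd (snd t)))),
      Complex (quat_inner (fst t) (fst (snd (snd t)) ** fst (snd (snd (snd (snd t))))))
        (quat_inner (fst t) (fst (snd (snd (snd (snd t))))))))"
    unfolding tuple_coords_def by (auto split: prod.split)
  show ?thesis
    unfolding coords_eq
    by (intro continuous_intros continuous_on_quat_inner continuous_on_matrix_mult)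
qed

lemma continuous_on_normal_tuple: "continuous_on S normal_tuple"
  unfolding normal_tuple_def by (intro continuous_intros continuous_on_quat)

theorem mainTheorem6:
  shows "homeomorphic_map (subtopology euclidean S3) char_variety param_map
         \<and> (\<forall>c\<in>topspace char_variety. nonabelian_class c)"
proof
  have r: "equiv (topspace (subtopology euclidean Rep_set)) conj_rel"
    using equiv_conj_rel by simp
  show "homeomorphic_map (subtopology euclidean S3) char_variety param_map"
    unfolding char_variety_def param_map_eq
  proof (rule homeomorphic_map_quotient_topology[OF r])
    show "continuous_map (subtopology euclidean S3) (subtopology euclidean Rep_set) normal_tuple"
      by (auto simp: continuous_map_in_subtopology continuous_on_normal_tuple normal_tuple_Rep_set)
    show "continuous_map (subtopology euclidean Rep_set) (subtopology euclidean S3) tuple_coords"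
      by (auto simp: continuous_map_in_subtopology continuous_on_tuple_coords
          Rep_set_conj_normal_tuple)
    show "tuple_coords t = tuple_coords t'" if "(t, t') \<in> conj_rel" for t t'
      using that by (auto simp: conj_rel_def tuple_coords_conj_tuple)
  qed (simp_all add: tuple_coords_normal_tuple Rep_set_conj_normal_tuple)
  show "\<forall>c\<in>topspace char_variety. nonabelian_class c"
  proof
    fix c assume "c \<in> topspace char_variety"
    then obtain t where "t \<in> Rep_set" "c = conj_rel `` {t}"
      unfolding char_variety_def topspace_quotient_topology[OF r] by (auto elim: quotientE)
    then have "t \<in> c" using equiv_class_self[OF equiv_conj_rel] by simp
    then show "nonabelian_class c"
      unfolding nonabelian_class_def using Rep_set_not_pairwise_commute \<open>t \<in> Rep_set\<close> by blast
  qed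
qed

end
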